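(* Let $(P_n)$ be a sequence of finite posets. Then the following are equivalent: (i) $t(Q,P_n)$ converges for every poset $Q\in\mathcal P$, and $|P_n|$ converges to some limit in $\mathbb N\cup\{\infty\}$; (ii) $t_{\mathrm{inj}}(Q,P_n)$ converges for every $Q\in\mathcal P$; (iii) $t_{\mathrm{ind}}(Q,P_n)$ converges for every $Q\in\mathcal P$; (iv) $t(F,P_n)$ converges for every digraph $F\in\mathcal D$, and $|P_n|$ converges to some limit in $\mathbb N\cup\{\infty\}$; (v) $t_{\mathrm{inj}}(F,P_n)$ converges for every $F\in\mathcal D$; (vi) $t_{\mathrm{ind}}(F,P_n)$ converges for every $F\in\mathcal D$.
   Context: A digraph has a vertex set $V$ and edge set $E\subseteq V\times V$ (loops allowed); $\mathcal D$ is the set of isomorphism classes of finite nonempty digraphs. A poset (nonempty set with strict partial order $<$) is regarded as the digraph with an edge $i\to j$ iff $i<j$; $\mathcal P\subset\mathcal D$ is the set of isomorphism classes of finite nonempty posets. For finite digraphs $F,G$: $t(F,G)$ is the proportion of all maps $\varphi:V(F)\to V(G)$ that are homomorphisms ($i\to j$ in $F$ implies $\varphi(i)\to\varphi(j)$ in $G$); $t_{\mathrm{inj}}(F,G)$ is the proportion of injective maps that are homomorphisms; $t_{\mathrm{ind}}(F,G)$ is the proportion of injective maps $\varphi$ with ($i\to j$ in $F$ iff $\varphi(i)\to\varphi(j)$ in $G$) for all $i,j$; if $|F|>|G|$, $t_{\mathrm{inj}}(F,G)=t_{\mathrm{ind}}(F,G)=0$. For posets these coincide with the poset versions. *)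

theory Defs
  imports "HOL-Analysis.Analysis" "HOL-Library.FuncSet"
begin

definition is_digraph :: "'a set \<Rightarrow> ('a \<times> 'a) set \<Rightarrow> bool" where
  "is_digraph V E \<longleftrightarrow> finite V \<and> V \<noteq> {} \<and> E \<subseteq> V \<times> V"

text \<open>A finite (nonempty) poset, viewed as the digraph with edge i \<rightarrow> j iff i < j
  (strict partial order: irreflexive and transitive).\<close>

definition is_poset :: "'a set \<Rightarrow> ('a \<times> 'a) set \<Rightarrow> bool" where
  "is_poset V E \<longleftrightarrow> is_digraph V E \<and> (\<forall>x\<in>V. (x, x) \<notin> E) \<and> trans E"

definition is_hom :: "('a \<times> 'a) set \<Rightarrow> ('b \<times> 'b) set \<Rightarrow> ('a \<Rightarrow> 'b) \<Rightarrow> bool" where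
  "is_hom EF EG \<phi> \<longleftrightarrow> (\<forall>i j. (i, j) \<in> EF \<longrightarrow> (\<phi> i, \<phi> j) \<in> EG)"

definition is_ind :: "'a set \<Rightarrow> ('a \<times> 'a) set \<Rightarrow> ('b \<times> 'b) set \<Rightarrow> ('a \<Rightarrow> 'b) \<Rightarrow> bool" where
  "is_ind VF EF EG \<phi> \<longleftrightarrow> (\<forall>i\<in>VF. \<forall>j\<in>VF. (i, j) \<in> EF \<longleftrightarrow> (\<phi> i, \<phi> j) \<in> EG)"

definition hom_dens :: "'a set \<Rightarrow> ('a \<times> 'a) set \<Rightarrow> 'b set \<Rightarrow> ('b \<times> 'b) set \<Rightarrow> real" where
  "hom_dens VF EF VG EG =
     real (card {\<phi> \<in> VF \<rightarrow>\<^sub>E VG. is_hom EF EG \<phi>}) / real (card (VF \<rightarrow>\<^sub>E VG))"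

definition inj_dens :: "'a set \<Rightarrow> ('a \<times> 'a) set \<Rightarrow> 'b set \<Rightarrow> ('b \<times> 'b) set \<Rightarrow> real" where
  "inj_dens VF EF VG EG =
     (if card VF > card VG then 0 else
      real (card {\<phi> \<in> VF \<rightarrow>\<^sub>E VG. inj_on \<phi> VF \<and> is_hom EF EG \<phi>})
        / real (card {\<phi> \<in> VF \<rightarrow>\<^sub>E VG. inj_on \<phi> VF}))"

definition ind_dens :: "'a set \<Rightarrow> ('a \<times> 'a) set \<Rightarrow> 'b set \<Rightarrow> ('b \<times> 'b) set \<Rightarrow> real" where
  "ind_dens VF EF VG EG =
     (if card VF > card VG then 0 else
      real (card {\<phi> \<in> VF \<rightarrow>\<^sub>E VG. inj_on \<phi> VF \<and> is_ind VF EF EG \<phi>})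
        / real (card {\<phi> \<in> VF \<rightarrow>\<^sub>E VG. inj_on \<phi> VF}))"

text \<open>Convergence of a sequence of naturals in \<nat> \<union> {\<infinity>}: eventually constant, or tends to \<infinity>.\<close>

definition card_converges :: "(nat \<Rightarrow> nat) \<Rightarrow> bool" where
  "card_converges s \<longleftrightarrow>
     (\<exists>L::nat. eventually (\<lambda>n. s n = L) sequentially) \<or> filterlim s at_top sequentially"

end

theory Submission
  imports Defs
begin

text \<open>
  Since the targets are posets, a homomorphism from a digraph F is the same as one from its
  transitive closure, and there is none if F has a directed cycle; induced copies exist only of
  posets. Hence every digraph density is a poset density or identically zero, which gives
  (i)\<longleftrightarrow>(iv), (ii)\<longleftrightarrow>(v) and (iii)\<longleftrightarrow>(vi). The injective density of F is the sum of the induced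
  densities of all digraphs on V(F) containing E(F), and this system is triangular with respect
  to the number of non-edges, so (v)\<longleftrightarrow>(vi).

  For (iv)\<longleftrightarrow>(v): the injective density of the k-antichain is 1 or 0 according to whether
  |P_n| \<ge> k, so (v) forces |P_n| to converge in \<nat> \<union> {\<infinity>}. If |P_n| \<rightarrow> \<infinity>, then t and t_inj differ
  by at most |F|^2/|P_n|. If |P_n| is eventually L, then every homomorphism factors uniquely as a
  quotient map of F followed by an injective homomorphism of the quotient, so
  L^|F| t(F) is a fixed combination of the numbers L(L-1)...(L-|q|+1) t_inj(q) over quotients q of F,
  in which F itself is the only quotient with |F| vertices.
\<close>

definition densities_converge ::
  "(nat set \<Rightarrow> (nat \<times> nat) set \<Rightarrow> bool)
   \<Rightarrow> (nat set \<Rightarrow> (nat \<times> nat) set \<Rightarrow> 'a set \<Rightarrow> ('a \<times> 'a) set \<Rightarrow> real)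
   \<Rightarrow> (nat \<Rightarrow> 'a set) \<Rightarrow> (nat \<Rightarrow> ('a \<times> 'a) set) \<Rightarrow> bool" where
  "densities_converge P t V E \<longleftrightarrow> (\<forall>F EF. P F EF \<longrightarrow> convergent (\<lambda>n. t F EF (V n) (E n)))"

subsection \<open>Densities as normalised counts\<close>

lemma card_inj_funcset:
  assumes "finite A" "finite B"
  shows "card {f \<in> A \<rightarrow>\<^sub>E B. inj_on f A} = (\<Prod>i<card A. card B - i)"
  using card_inj_on_subset_funcset[OF assms subset_refl] by (simp add: atLeast0LessThan)

lemma no_inj_funcset_into_smaller:
  assumes "finite B" "card B < card A"
  shows "{f \<in> A \<rightarrow>\<^sub>E B. inj_on f A} = {}"
  using assms card_inj[of _ A B] by (force simp: PiE_iff)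

lemma card_hom_eq:
  assumes "finite VF" "finite VG"
  shows "real (card {\<phi> \<in> VF \<rightarrow>\<^sub>E VG. is_hom EF EG \<phi>}) = hom_dens VF EF VG EG * card VG ^ card VF"
proof (cases "card VG ^ card VF = 0")
  case True
  then have "VF \<rightarrow>\<^sub>E VG = {}"
    using assms by (simp add: card_funcsetE[symmetric] finite_PiE)
  then show ?thesis by (simp add: hom_dens_def)
next
  case False
  then show ?thesis using assms by (simp add: hom_dens_def card_funcsetE)
qed

lemma inj_dens_eq_ratio:
  assumes "finite VG"
  shows "inj_dens VF EF VG EG = real (card {\<phi> \<in> VF \<rightarrow>\<^sub>E VG. inj_on \<phi> VF \<and> is_hom EF EG \<phi>})
                                / real (card {\<phi> \<in> VF \<rightarrow>\<^sub>E VG. inj_on \<phi> VF})"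
proof (cases "card VG < card VF")
  case True
  then have no_inj: "{\<phi> \<in> VF \<rightarrow>\<^sub>E VG. inj_on \<phi> VF} = {}"
    by (rule no_inj_funcset_into_smaller[OF assms])
  then have "{\<phi> \<in> VF \<rightarrow>\<^sub>E VG. inj_on \<phi> VF \<and> is_hom EF EG \<phi>} = {}" by blast
  then show ?thesis unfolding inj_dens_def no_inj using True by simp
qed (simp add: inj_dens_def)

lemma ind_dens_eq_ratio:
  assumes "finite VG"
  shows "ind_dens VF EF VG EG = real (card {\<phi> \<in> VF \<rightarrow>\<^sub>E VG. inj_on \<phi> VF \<and> is_ind VF EF EG \<phi>})
                                / real (card {\<phi> \<in> VF \<rightarrow>\<^sub>E VG. inj_on \<phi> VF})"
proof (cases "card VG < card VF")
  case True
  then have no_inj: "{\<phi> \<in> VF \<rightarrow>\<^sub>E VG. inj_on \<phi> VF} = {}"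
    by (rule no_inj_funcset_into_smaller[OF assms])
  then have "{\<phi> \<in> VF \<rightarrow>\<^sub>E VG. inj_on \<phi> VF \<and> is_ind VF EF EG \<phi>} = {}" by blast
  then show ?thesis unfolding ind_dens_def no_inj using True by simp
qed (simp add: ind_dens_def)

lemma card_inj_hom_eq:
  assumes "finite VF" "finite VG"
  shows "real (card {\<phi> \<in> VF \<rightarrow>\<^sub>E VG. inj_on \<phi> VF \<and> is_hom EF EG \<phi>})
           = inj_dens VF EF VG EG * (\<Prod>i<card VF. card VG - i)"
proof (cases "(\<Prod>i<card VF. card VG - i) = 0")
  case True
  then have "{\<phi> \<in> VF \<rightarrow>\<^sub>E VG. inj_on \<phi> VF} = {}"
    using assms by (simp add: card_inj_funcset[symmetric] finite_PiE)
  then have "{\<phi> \<in> VF \<rightarrow>\<^sub>E VG. inj_on \<phi> VF \<and> is_hom EF EG \<phi>} = {}" by blast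
  then show ?thesis by (simp only: True card.empty of_nat_0 mult_zero_right)
next
  case False
  then show ?thesis using assms by (simp add: inj_dens_eq_ratio card_inj_funcset)
qed

subsection \<open>Reduction from digraphs to posets\<close>

lemma is_hom_trancl_iff:
  assumes "trans EG"
  shows "is_hom (EF\<^sup>+) EG \<phi> \<longleftrightarrow> is_hom EF EG \<phi>"
proof
  assume "is_hom (EF\<^sup>+) EG \<phi>"
  then show "is_hom EF EG \<phi>" by (auto simp: is_hom_def)
next
  assume hom: "is_hom EF EG \<phi>"
  have "(\<phi> i, \<phi> j) \<in> EG" if "(i, j) \<in> EF\<^sup>+" for i j
    using that
  proof (induction rule: trancl_induct)
    case (base j)
    then show ?case using hom by (simp add: is_hom_def)
  next
    case (step j k)
    then show ?case using hom assms by (meson is_hom_def transD)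
  qed
  then show "is_hom (EF\<^sup>+) EG \<phi>" by (simp add: is_hom_def)
qed

lemma not_is_hom_if_cycle:
  assumes "is_poset VG EG" "\<phi> \<in> VF \<rightarrow>\<^sub>E VG" "x \<in> VF" "(x, x) \<in> EF\<^sup>+"
  shows "\<not> is_hom EF EG \<phi>"
proof
  assume "is_hom EF EG \<phi>"
  with assms(1) have "is_hom (EF\<^sup>+) EG \<phi>" by (simp add: is_hom_trancl_iff is_poset_def)
  with assms(4) have "(\<phi> x, \<phi> x) \<in> EG" by (simp add: is_hom_def)
  with assms(1-3) show False by (auto simp: is_poset_def)
qed

lemma is_poset_trancl:
  assumes "is_digraph VF EF" "\<forall>x\<in>VF. (x, x) \<notin> EF\<^sup>+"
  shows "is_poset VF (EF\<^sup>+)"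
proof -
  have "EF \<subseteq> VF \<times> VF" using assms(1) by (simp add: is_digraph_def)
  then have "EF\<^sup>+ \<subseteq> VF \<times> VF" by (rule trancl_subset_Sigma)
  with assms show ?thesis by (simp add: is_poset_def is_digraph_def)
qed

lemma is_poset_if_is_ind:
  assumes "is_digraph VF EF" "is_poset VG EG" "\<phi> \<in> VF \<rightarrow>\<^sub>E VG" "is_ind VF EF EG \<phi>"
  shows "is_poset VF EF"
proof -
  have EF: "EF \<subseteq> VF \<times> VF" using assms(1) by (simp add: is_digraph_def)
  have irrefl: "(x, x) \<notin> EF" if "x \<in> VF" for x
    using that assms(2-4) by (auto simp: is_poset_def is_ind_def)
  have "trans EF"
  proof (rule transI)
    fix x y z assume xy: "(x, y) \<in> EF" and yz: "(y, z) \<in> EF"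
    then have in_VF: "x \<in> VF" "y \<in> VF" "z \<in> VF" using EF by auto
    with xy yz assms(4) have "(\<phi> x, \<phi> y) \<in> EG" "(\<phi> y, \<phi> z) \<in> EG"
      by (simp_all add: is_ind_def)
    with assms(2) have "(\<phi> x, \<phi> z) \<in> EG" unfolding is_poset_def by (blast dest: transD)
    with in_VF assms(4) show "(x, z) \<in> EF" by (simp add: is_ind_def)
  qed
  with assms(1) irrefl show ?thesis by (simp add: is_poset_def)
qed

lemma hom_dens_trancl: "trans EG \<Longrightarrow> hom_dens VF (EF\<^sup>+) VG EG = hom_dens VF EF VG EG"
  by (simp add: hom_dens_def is_hom_trancl_iff)

lemma inj_dens_trancl: "trans EG \<Longrightarrow> inj_dens VF (EF\<^sup>+) VG EG = inj_dens VF EF VG EG"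
  by (simp add: inj_dens_def is_hom_trancl_iff)

lemma hom_dens_cyclic:
  assumes "is_poset VG EG" "x \<in> VF" "(x, x) \<in> EF\<^sup>+"
  shows "hom_dens VF EF VG EG = 0"
proof -
  have no_hom: "{\<phi> \<in> VF \<rightarrow>\<^sub>E VG. is_hom EF EG \<phi>} = {}"
    using not_is_hom_if_cycle[OF assms(1) _ assms(2,3)] by blast
  show ?thesis unfolding hom_dens_def no_hom by simp
qed

lemma inj_dens_cyclic:
  assumes "is_poset VG EG" "x \<in> VF" "(x, x) \<in> EF\<^sup>+"
  shows "inj_dens VF EF VG EG = 0"
proof -
  have no_hom: "{\<phi> \<in> VF \<rightarrow>\<^sub>E VG. inj_on \<phi> VF \<and> is_hom EF EG \<phi>} = {}"
    using not_is_hom_if_cycle[OF assms(1) _ assms(2,3)] by blast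
  show ?thesis unfolding inj_dens_def no_hom by simp
qed

lemma ind_dens_non_poset:
  assumes "is_digraph VF EF" "\<not> is_poset VF EF" "is_poset VG EG"
  shows "ind_dens VF EF VG EG = 0"
proof -
  have no_ind: "{\<phi> \<in> VF \<rightarrow>\<^sub>E VG. inj_on \<phi> VF \<and> is_ind VF EF EG \<phi>} = {}"
    using is_poset_if_is_ind[OF assms(1,3)] assms(2) by blast
  show ?thesis unfolding ind_dens_def no_ind by simp
qed

lemma densities_converge_digraphs_iff_posets:
  fixes t :: "nat set \<Rightarrow> (nat \<times> nat) set \<Rightarrow> 'a set \<Rightarrow> ('a \<times> 'a) set \<Rightarrow> real"
  assumes "\<And>(F :: nat set) EF. is_digraph F EF \<Longrightarrow> \<not> is_poset F EF \<Longrightarrow>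
             (\<exists>EQ. is_poset F EQ \<and> (\<forall>n. t F EF (V n) (E n) = t F EQ (V n) (E n)))
             \<or> (\<forall>n. t F EF (V n) (E n) = 0)"
  shows "densities_converge is_digraph t V E \<longleftrightarrow> densities_converge is_poset t V E"
proof
  assume "densities_converge is_digraph t V E"
  then show "densities_converge is_poset t V E" by (simp add: densities_converge_def is_poset_def)
next
  assume conv: "densities_converge is_poset t V E"
  show "densities_converge is_digraph t V E"
    unfolding densities_converge_def
  proof (intro allI impI)
    fix F :: "nat set" and EF assume F: "is_digraph F EF"
    show "convergent (\<lambda>n. t F EF (V n) (E n))"
    proof (cases "is_poset F EF")
      case False
      from assms[OF F False] show ?thesis
      proof (elim disjE exE conjE)
        fix EQ assume "is_poset F EQ" "\<forall>n. t F EF (V n) (E n) = t F EQ (V n) (E n)"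
        then show ?thesis using conv by (simp add: densities_converge_def)
      qed (simp add: convergent_const)
    qed (use conv in \<open>simp add: densities_converge_def\<close>)
  qed
qed

lemma hom_densities_converge_digraphs_iff_posets:
  assumes "\<And>n. is_poset (V n) (E n)"
  shows "densities_converge is_digraph hom_dens V E \<longleftrightarrow> densities_converge is_poset hom_dens V E"
proof (rule densities_converge_digraphs_iff_posets)
  fix F :: "nat set" and EF assume F: "is_digraph F EF"
  show "(\<exists>EQ. is_poset F EQ \<and> (\<forall>n. hom_dens F EF (V n) (E n) = hom_dens F EQ (V n) (E n)))
        \<or> (\<forall>n. hom_dens F EF (V n) (E n) = 0)"
  proof (cases "\<forall>x\<in>F. (x, x) \<notin> EF\<^sup>+")
    case True
    have "\<forall>n. hom_dens F EF (V n) (E n) = hom_dens F (EF\<^sup>+) (V n) (E n)"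
      using assms by (simp add: is_poset_def hom_dens_trancl)
    with is_poset_trancl[OF F True] show ?thesis by (intro disjI1 exI conjI)
  next
    case False
    then obtain x where x: "x \<in> F" "(x, x) \<in> EF\<^sup>+" by blast
    have "\<forall>n. hom_dens F EF (V n) (E n) = 0" using hom_dens_cyclic[OF assms x] by simp
    then show ?thesis ..
  qed
qed

lemma inj_densities_converge_digraphs_iff_posets:
  assumes "\<And>n. is_poset (V n) (E n)"
  shows "densities_converge is_digraph inj_dens V E \<longleftrightarrow> densities_converge is_poset inj_dens V E"
proof (rule densities_converge_digraphs_iff_posets)
  fix F :: "nat set" and EF assume F: "is_digraph F EF"
  show "(\<exists>EQ. is_poset F EQ \<and> (\<forall>n. inj_dens F EF (V n) (E n) = inj_dens F EQ (V n) (E n)))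
        \<or> (\<forall>n. inj_dens F EF (V n) (E n) = 0)"
  proof (cases "\<forall>x\<in>F. (x, x) \<notin> EF\<^sup>+")
    case True
    have "\<forall>n. inj_dens F EF (V n) (E n) = inj_dens F (EF\<^sup>+) (V n) (E n)"
      using assms by (simp add: is_poset_def inj_dens_trancl)
    with is_poset_trancl[OF F True] show ?thesis by (intro disjI1 exI conjI)
  next
    case False
    then obtain x where x: "x \<in> F" "(x, x) \<in> EF\<^sup>+" by blast
    have "\<forall>n. inj_dens F EF (V n) (E n) = 0" using inj_dens_cyclic[OF assms x] by simp
    then show ?thesis ..
  qed
qed

lemma ind_densities_converge_digraphs_iff_posets:
  assumes "\<And>n. is_poset (V n) (E n)"
  shows "densities_converge is_digraph ind_dens V E \<longleftrightarrow> densities_converge is_poset ind_dens V E"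
  using ind_dens_non_poset[OF _ _ assms] by (intro densities_converge_digraphs_iff_posets) blast

subsection \<open>Injective versus induced densities\<close>

definition edge_supersets :: "'a set \<Rightarrow> ('a \<times> 'a) set \<Rightarrow> ('a \<times> 'a) set set" where
  "edge_supersets VF EF = {E'. EF \<subseteq> E' \<and> E' \<subseteq> VF \<times> VF}"

lemma finite_edge_supersets: "finite VF \<Longrightarrow> finite (edge_supersets VF EF)"
  by (rule finite_subset[of _ "Pow (VF \<times> VF)"]) (auto simp: edge_supersets_def)

lemma is_digraph_edge_supersets: "is_digraph VF EF \<Longrightarrow> E' \<in> edge_supersets VF EF \<Longrightarrow> is_digraph VF E'"
  by (simp add: is_digraph_def edge_supersets_def)

lemma is_ind_unique:
  assumes "E1 \<subseteq> VF \<times> VF" "E2 \<subseteq> VF \<times> VF" "is_ind VF E1 EG \<phi>" "is_ind VF E2 EG \<phi>"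
  shows "E1 = E2"
  using assms unfolding is_ind_def by auto

lemma inj_homs_eq_UN_ind_embeddings:
  assumes "EF \<subseteq> VF \<times> VF"
  shows "{\<phi> \<in> VF \<rightarrow>\<^sub>E VG. inj_on \<phi> VF \<and> is_hom EF EG \<phi>}
       = (\<Union>E'\<in>edge_supersets VF EF. {\<phi> \<in> VF \<rightarrow>\<^sub>E VG. inj_on \<phi> VF \<and> is_ind VF E' EG \<phi>})"
proof (intro equalityI subsetI)
  fix \<phi> assume \<phi>: "\<phi> \<in> {\<phi> \<in> VF \<rightarrow>\<^sub>E VG. inj_on \<phi> VF \<and> is_hom EF EG \<phi>}"
  define E' where "E' = {(i, j) \<in> VF \<times> VF. (\<phi> i, \<phi> j) \<in> EG}"
  have "E' \<in> edge_supersets VF EF"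
    using \<phi> assms by (auto simp: E'_def edge_supersets_def is_hom_def)
  moreover have "is_ind VF E' EG \<phi>" by (simp add: E'_def is_ind_def)
  ultimately show "\<phi> \<in> (\<Union>E'\<in>edge_supersets VF EF. {\<phi> \<in> VF \<rightarrow>\<^sub>E VG. inj_on \<phi> VF \<and> is_ind VF E' EG \<phi>})"
    using \<phi> by blast
next
  fix \<phi> assume "\<phi> \<in> (\<Union>E'\<in>edge_supersets VF EF. {\<phi> \<in> VF \<rightarrow>\<^sub>E VG. inj_on \<phi> VF \<and> is_ind VF E' EG \<phi>})"
  then obtain E' where "EF \<subseteq> E'" "E' \<subseteq> VF \<times> VF" "is_ind VF E' EG \<phi>"
    and \<phi>: "\<phi> \<in> VF \<rightarrow>\<^sub>E VG" "inj_on \<phi> VF"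
    by (auto simp: edge_supersets_def)
  then have "is_hom EF EG \<phi>" by (auto simp: is_hom_def is_ind_def)
  with \<phi> show "\<phi> \<in> {\<phi> \<in> VF \<rightarrow>\<^sub>E VG. inj_on \<phi> VF \<and> is_hom EF EG \<phi>}" by blast
qed

lemma inj_dens_eq_sum_ind_dens:
  assumes "finite VF" "finite VG" "EF \<subseteq> VF \<times> VF"
  shows "inj_dens VF EF VG EG = (\<Sum>E'\<in>edge_supersets VF EF. ind_dens VF E' VG EG)"
proof -
  have "card {\<phi> \<in> VF \<rightarrow>\<^sub>E VG. inj_on \<phi> VF \<and> is_hom EF EG \<phi>}
      = (\<Sum>E'\<in>edge_supersets VF EF. card {\<phi> \<in> VF \<rightarrow>\<^sub>E VG. inj_on \<phi> VF \<and> is_ind VF E' EG \<phi>})"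
    unfolding inj_homs_eq_UN_ind_embeddings[OF assms(3)]
  proof (rule card_UN_disjoint)
    show "finite (edge_supersets VF EF)" by (rule finite_edge_supersets[OF assms(1)])
    show "\<forall>E'\<in>edge_supersets VF EF. finite {\<phi> \<in> VF \<rightarrow>\<^sub>E VG. inj_on \<phi> VF \<and> is_ind VF E' EG \<phi>}"
      using assms(1,2) by (simp add: finite_PiE)
    show "\<forall>E1\<in>edge_supersets VF EF. \<forall>E2\<in>edge_supersets VF EF. E1 \<noteq> E2 \<longrightarrow>
        {\<phi> \<in> VF \<rightarrow>\<^sub>E VG. inj_on \<phi> VF \<and> is_ind VF E1 EG \<phi>}
        \<inter> {\<phi> \<in> VF \<rightarrow>\<^sub>E VG. inj_on \<phi> VF \<and> is_ind VF E2 EG \<phi>} = {}"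
    proof (intro ballI impI)
      fix E1 E2 assume "E1 \<in> edge_supersets VF EF" "E2 \<in> edge_supersets VF EF" "E1 \<noteq> E2"
      then show "{\<phi> \<in> VF \<rightarrow>\<^sub>E VG. inj_on \<phi> VF \<and> is_ind VF E1 EG \<phi>}
        \<inter> {\<phi> \<in> VF \<rightarrow>\<^sub>E VG. inj_on \<phi> VF \<and> is_ind VF E2 EG \<phi>} = {}"
        using is_ind_unique[of E1 VF E2 EG] by (auto simp: edge_supersets_def)
    qed
  qed
  then show ?thesis
    using assms(2) by (simp add: inj_dens_eq_ratio ind_dens_eq_ratio sum_divide_distrib)
qed

lemma inj_densities_converge_iff_ind:
  assumes fin: "\<And>n. finite (V n)"
  shows "densities_converge is_digraph inj_dens V E \<longleftrightarrow> densities_converge is_digraph ind_dens V E"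
proof
  assume ind: "densities_converge is_digraph ind_dens V E"
  show "densities_converge is_digraph inj_dens V E"
    unfolding densities_converge_def
  proof (intro allI impI)
    fix F :: "nat set" and EF assume F: "is_digraph F EF"
    then have "inj_dens F EF (V n) (E n) = (\<Sum>E'\<in>edge_supersets F EF. ind_dens F E' (V n) (E n))" for n
      using fin by (simp add: is_digraph_def inj_dens_eq_sum_ind_dens)
    moreover have "convergent (\<lambda>n. \<Sum>E'\<in>edge_supersets F EF. ind_dens F E' (V n) (E n))"
      using ind is_digraph_edge_supersets[OF F]
      by (intro convergent_sum) (simp add: densities_converge_def)
    ultimately show "convergent (\<lambda>n. inj_dens F EF (V n) (E n))" by simp
  qed
next
  assume inj: "densities_converge is_digraph inj_dens V E"
  have "convergent (\<lambda>n. ind_dens F EF (V n) (E n))" if "is_digraph F EF" for F :: "nat set" and EF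
    using that
  proof (induction "card (F \<times> F - EF)" arbitrary: EF rule: less_induct)
    case less
    have fin_F: "finite F" and EF: "EF \<subseteq> F \<times> F" using less.prems by (auto simp: is_digraph_def)
    have EF_mem: "EF \<in> edge_supersets F EF" using EF by (simp add: edge_supersets_def)
    have "ind_dens F EF (V n) (E n)
        = inj_dens F EF (V n) (E n) - (\<Sum>E'\<in>edge_supersets F EF - {EF}. ind_dens F E' (V n) (E n))" for n
      using inj_dens_eq_sum_ind_dens[OF fin_F fin EF]
        sum.remove[OF finite_edge_supersets[OF fin_F] EF_mem, of "\<lambda>E'. ind_dens F E' (V n) (E n)"]
      by simp
    moreover have "convergent (\<lambda>n. \<Sum>E'\<in>edge_supersets F EF - {EF}. ind_dens F E' (V n) (E n))"
    proof (rule convergent_sum)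
      fix E' assume E': "E' \<in> edge_supersets F EF - {EF}"
      then have "F \<times> F - E' \<subset> F \<times> F - EF" by (auto simp: edge_supersets_def)
      then have "card (F \<times> F - E') < card (F \<times> F - EF)"
        using fin_F by (intro psubset_card_mono) auto
      with E' less.prems show "convergent (\<lambda>n. ind_dens F E' (V n) (E n))"
        by (intro less.hyps) (auto intro: is_digraph_edge_supersets)
    qed
    moreover have "convergent (\<lambda>n. inj_dens F EF (V n) (E n))"
      using inj less.prems by (simp add: densities_converge_def)
    ultimately show ?case by (simp add: convergent_diff)
  qed
  then show "densities_converge is_digraph ind_dens V E" by (simp add: densities_converge_def)
qed

subsection \<open>Homomorphisms factor through quotients\<close>

text \<open>A kernel retraction of a set A of naturals sends each element to the least element of its
  class; kernel retractions of A thus encode the partitions of A. The kernel retraction of a map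
  encodes its kernel.\<close>

definition kernel_retractions :: "nat set \<Rightarrow> (nat \<Rightarrow> nat) set" where
  "kernel_retractions A = {r \<in> A \<rightarrow>\<^sub>E A. \<forall>i\<in>A. r (r i) = r i \<and> r i \<le> i}"

definition kernel_retraction :: "nat set \<Rightarrow> (nat \<Rightarrow> 'b) \<Rightarrow> nat \<Rightarrow> nat" where
  "kernel_retraction A \<phi> = (\<lambda>i\<in>A. LEAST j. j \<in> A \<and> \<phi> j = \<phi> i)"

lemma kernel_retraction_least:
  assumes "i \<in> A"
  shows "kernel_retraction A \<phi> i \<in> A" "\<phi> (kernel_retraction A \<phi> i) = \<phi> i"
    "kernel_retraction A \<phi> i \<le> i"
  using assms LeastI[of "\<lambda>j. j \<in> A \<and> \<phi> j = \<phi> i" i] Least_le[of "\<lambda>j. j \<in> A \<and> \<phi> j = \<phi> i" i]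
  by (simp_all add: kernel_retraction_def)

lemma kernel_retraction_eq_iff:
  assumes "i \<in> A" "j \<in> A"
  shows "kernel_retraction A \<phi> i = kernel_retraction A \<phi> j \<longleftrightarrow> \<phi> i = \<phi> j"
proof
  assume "kernel_retraction A \<phi> i = kernel_retraction A \<phi> j"
  then show "\<phi> i = \<phi> j"
    using kernel_retraction_least(2)[OF assms(1)] kernel_retraction_least(2)[OF assms(2)] by metis
qed (use assms in \<open>simp add: kernel_retraction_def\<close>)

lemma kernel_retraction_in_kernel_retractions: "kernel_retraction A \<phi> \<in> kernel_retractions A"
  using kernel_retraction_least[of _ A \<phi>] kernel_retraction_eq_iff[of _ A _ \<phi>]
  by (auto simp: kernel_retractions_def kernel_retraction_def)

lemma kernel_retraction_comp:
  assumes r: "r \<in> kernel_retractions A" and inj: "inj_on \<psi> (r ` A)"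
  shows "kernel_retraction A (\<lambda>i\<in>A. \<psi> (r i)) = r"
proof
  fix i show "kernel_retraction A (\<lambda>i\<in>A. \<psi> (r i)) i = r i"
  proof (cases "i \<in> A")
    case True
    have "(LEAST j. j \<in> A \<and> \<psi> (r j) = \<psi> (r i)) = r i"
    proof (rule Least_equality)
      show "r i \<in> A \<and> \<psi> (r (r i)) = \<psi> (r i)" using r True by (auto simp: kernel_retractions_def)
    next
      fix j assume "j \<in> A \<and> \<psi> (r j) = \<psi> (r i)"
      with inj True have "r j = r i" by (auto dest: inj_onD)
      with r \<open>j \<in> A \<and> _\<close> show "r i \<le> j" by (force simp: kernel_retractions_def)
    qed
    with True show ?thesis by (simp add: kernel_retraction_def cong: conj_cong)
  next
    case False
    with r show ?thesis by (auto simp: kernel_retraction_def kernel_retractions_def PiE_def extensional_def)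
  qed
qed

lemma finite_kernel_retractions: "finite A \<Longrightarrow> finite (kernel_retractions A)"
  by (rule finite_subset[of _ "A \<rightarrow>\<^sub>E A"]) (auto simp: kernel_retractions_def finite_PiE)

lemma id_in_kernel_retractions: "(\<lambda>i\<in>A. i) \<in> kernel_retractions A"
  by (simp add: kernel_retractions_def)

lemma card_image_kernel_retraction_less:
  assumes "finite A" "r \<in> kernel_retractions A" "r \<noteq> (\<lambda>i\<in>A. i)"
  shows "card (r ` A) < card A"
proof -
  have sub: "r ` A \<subseteq> A" using assms(2) by (auto simp: kernel_retractions_def)
  have "r ` A \<noteq> A"
  proof
    assume image: "r ` A = A"
    have "r i = (\<lambda>i\<in>A. i) i" for i
    proof (cases "i \<in> A")
      case True
      with image have "i \<in> r ` A" by simp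
      then obtain j where j: "j \<in> A" "i = r j" by blast
      have "r (r j) = r j" using assms(2) j(1) by (simp add: kernel_retractions_def)
      with j True show ?thesis by simp
    next
      case False
      with assms(2) PiE_arb[of r A "\<lambda>_. A" i] show ?thesis by (simp add: kernel_retractions_def)
    qed
    then have "r = (\<lambda>i\<in>A. i)" by (rule ext)
    with assms(3) show False by contradiction
  qed
  with sub show ?thesis using assms(1) by (simp add: psubset_card_mono)
qed

lemma is_digraph_quotient:
  assumes "is_digraph VF EF" "r \<in> kernel_retractions VF"
  shows "is_digraph (r ` VF) (map_prod r r ` EF)"
proof -
  have "EF \<subseteq> VF \<times> VF" using assms(1) by (simp add: is_digraph_def)
  then have "map_prod r r ` EF \<subseteq> r ` VF \<times> r ` VF" by auto
  with assms(1) show ?thesis by (simp add: is_digraph_def)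
qed

lemma homs_with_kernel_eq_image:
  assumes r: "r \<in> kernel_retractions VF" and EF: "EF \<subseteq> VF \<times> VF"
  shows "{\<phi> \<in> VF \<rightarrow>\<^sub>E VG. is_hom EF EG \<phi> \<and> kernel_retraction VF \<phi> = r}
       = (\<lambda>\<psi>. \<lambda>i\<in>VF. \<psi> (r i))
           ` {\<psi> \<in> r ` VF \<rightarrow>\<^sub>E VG. inj_on \<psi> (r ` VF) \<and> is_hom (map_prod r r ` EF) EG \<psi>}"
proof (intro equalityI subsetI)
  fix \<phi> assume "\<phi> \<in> {\<phi> \<in> VF \<rightarrow>\<^sub>E VG. is_hom EF EG \<phi> \<and> kernel_retraction VF \<phi> = r}"
  then have \<phi>: "\<phi> \<in> VF \<rightarrow>\<^sub>E VG" "is_hom EF EG \<phi>" and ker: "kernel_retraction VF \<phi> = r" by auto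
  have \<phi>_r: "\<phi> (r i) = \<phi> i" if "i \<in> VF" for i
    using kernel_retraction_least(2)[OF that, of \<phi>] ker by simp
  define \<psi> where "\<psi> = restrict \<phi> (r ` VF)"
  have "r ` VF \<subseteq> VF" using r by (auto simp: kernel_retractions_def)
  then have "\<psi> \<in> r ` VF \<rightarrow>\<^sub>E VG" using \<phi>(1) by (auto simp: \<psi>_def)
  moreover have "inj_on \<psi> (r ` VF)"
    using \<phi>_r kernel_retraction_eq_iff[of _ VF _ \<phi>] ker by (auto simp: \<psi>_def inj_on_def)
  moreover have "is_hom (map_prod r r ` EF) EG \<psi>"
    using \<phi>(2) \<phi>_r EF by (auto simp: \<psi>_def is_hom_def)
  moreover have "\<phi> = (\<lambda>i\<in>VF. \<psi> (r i))"
    using \<phi>(1) \<phi>_r by (auto simp: \<psi>_def PiE_def extensional_def)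
  ultimately show "\<phi> \<in> (\<lambda>\<psi>. \<lambda>i\<in>VF. \<psi> (r i))
           ` {\<psi> \<in> r ` VF \<rightarrow>\<^sub>E VG. inj_on \<psi> (r ` VF) \<and> is_hom (map_prod r r ` EF) EG \<psi>}"
    by blast
next
  fix \<phi> assume "\<phi> \<in> (\<lambda>\<psi>. \<lambda>i\<in>VF. \<psi> (r i))
           ` {\<psi> \<in> r ` VF \<rightarrow>\<^sub>E VG. inj_on \<psi> (r ` VF) \<and> is_hom (map_prod r r ` EF) EG \<psi>}"
  then obtain \<psi> where \<psi>: "\<psi> \<in> r ` VF \<rightarrow>\<^sub>E VG" "inj_on \<psi> (r ` VF)" "is_hom (map_prod r r ` EF) EG \<psi>"
    and \<phi>: "\<phi> = (\<lambda>i\<in>VF. \<psi> (r i))" by blast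
  have "\<phi> \<in> VF \<rightarrow>\<^sub>E VG" using \<psi>(1) by (auto simp: \<phi>)
  moreover have "is_hom EF EG \<phi>"
    using \<psi>(3) EF by (force simp: \<phi> is_hom_def)
  moreover have "kernel_retraction VF \<phi> = r"
    unfolding \<phi> by (rule kernel_retraction_comp[OF r \<psi>(2)])
  ultimately show "\<phi> \<in> {\<phi> \<in> VF \<rightarrow>\<^sub>E VG. is_hom EF EG \<phi> \<and> kernel_retraction VF \<phi> = r}" by blast
qed

lemma inj_on_comp_kernel_retraction:
  assumes "r \<in> kernel_retractions A"
  shows "inj_on (\<lambda>\<psi>. \<lambda>i\<in>A. \<psi> (r i)) (r ` A \<rightarrow>\<^sub>E B)"
proof (rule inj_onI)
  fix \<psi>1 \<psi>2 assume \<psi>: "\<psi>1 \<in> r ` A \<rightarrow>\<^sub>E B" "\<psi>2 \<in> r ` A \<rightarrow>\<^sub>E B"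
    and eq: "(\<lambda>i\<in>A. \<psi>1 (r i)) = (\<lambda>i\<in>A. \<psi>2 (r i))"
  show "\<psi>1 = \<psi>2"
  proof
    fix a show "\<psi>1 a = \<psi>2 a"
    proof (cases "a \<in> r ` A")
      case True
      then obtain i where "i \<in> A" "a = r i" by blast
      then show ?thesis using fun_cong[OF eq, of i] by simp
    qed (use \<psi> PiE_arb[of \<psi>1 "r ` A" "\<lambda>_. B" a] PiE_arb[of \<psi>2 "r ` A" "\<lambda>_. B" a] in simp)
  qed
qed

lemma card_homs_eq_sum_card_inj_homs:
  assumes "finite VF" "finite VG" "EF \<subseteq> VF \<times> VF"
  shows "card {\<phi> \<in> VF \<rightarrow>\<^sub>E VG. is_hom EF EG \<phi>}
       = (\<Sum>r\<in>kernel_retractions VF.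
            card {\<psi> \<in> r ` VF \<rightarrow>\<^sub>E VG. inj_on \<psi> (r ` VF) \<and> is_hom (map_prod r r ` EF) EG \<psi>})"
proof -
  have "{\<phi> \<in> VF \<rightarrow>\<^sub>E VG. is_hom EF EG \<phi>}
      = (\<Union>r\<in>kernel_retractions VF. {\<phi> \<in> VF \<rightarrow>\<^sub>E VG. is_hom EF EG \<phi> \<and> kernel_retraction VF \<phi> = r})"
    using kernel_retraction_in_kernel_retractions by blast
  then have "card {\<phi> \<in> VF \<rightarrow>\<^sub>E VG. is_hom EF EG \<phi>}
      = (\<Sum>r\<in>kernel_retractions VF. card {\<phi> \<in> VF \<rightarrow>\<^sub>E VG. is_hom EF EG \<phi> \<and> kernel_retraction VF \<phi> = r})"
    using assms(1,2) by (auto intro!: card_UN_disjoint simp: finite_kernel_retractions finite_PiE)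
  also have "\<dots> = (\<Sum>r\<in>kernel_retractions VF.
            card {\<psi> \<in> r ` VF \<rightarrow>\<^sub>E VG. inj_on \<psi> (r ` VF) \<and> is_hom (map_prod r r ` EF) EG \<psi>})"
  proof (rule sum.cong[OF refl])
    fix r assume r: "r \<in> kernel_retractions VF"
    show "card {\<phi> \<in> VF \<rightarrow>\<^sub>E VG. is_hom EF EG \<phi> \<and> kernel_retraction VF \<phi> = r}
        = card {\<psi> \<in> r ` VF \<rightarrow>\<^sub>E VG. inj_on \<psi> (r ` VF) \<and> is_hom (map_prod r r ` EF) EG \<psi>}"
      unfolding homs_with_kernel_eq_image[OF r assms(3)]
      by (rule card_image, rule inj_on_subset[OF inj_on_comp_kernel_retraction[OF r]]) blast
  qed
  finally show ?thesis .
qed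

lemma hom_dens_eq_sum_inj_dens:
  assumes "finite VF" "finite VG" "EF \<subseteq> VF \<times> VF"
  shows "hom_dens VF EF VG EG * card VG ^ card VF
       = (\<Sum>r\<in>kernel_retractions VF.
            inj_dens (r ` VF) (map_prod r r ` EF) VG EG * (\<Prod>i<card (r ` VF). card VG - i))"
proof -
  have "real (card {\<phi> \<in> VF \<rightarrow>\<^sub>E VG. is_hom EF EG \<phi>})
      = (\<Sum>r\<in>kernel_retractions VF.
          real (card {\<psi> \<in> r ` VF \<rightarrow>\<^sub>E VG. inj_on \<psi> (r ` VF) \<and> is_hom (map_prod r r ` EF) EG \<psi>}))"
    by (simp add: card_homs_eq_sum_card_inj_homs[OF assms])
  also have "\<dots> = (\<Sum>r\<in>kernel_retractions VF.
            inj_dens (r ` VF) (map_prod r r ` EF) VG EG * (\<Prod>i<card (r ` VF). card VG - i))"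
    using assms(1,2) by (intro sum.cong refl card_inj_hom_eq) auto
  finally show ?thesis by (simp only: card_hom_eq[OF assms(1,2)])
qed

subsection \<open>Convergence of the sizes\<close>

lemma eventually_const_if_convergent_nat:
  fixes c :: "nat \<Rightarrow> nat"
  assumes "convergent (\<lambda>n. real (c n))"
  shows "\<exists>v. eventually (\<lambda>n. c n = v) sequentially"
proof -
  obtain M where M: "\<forall>m\<ge>M. \<forall>n\<ge>M. norm (real (c m) - real (c n)) < 1"
    using CauchyD[OF convergent_Cauchy[OF assms], of 1] by auto
  have "c n = c M" if "n \<ge> M" for n
  proof -
    have "\<bar>real (c n) - real (c M)\<bar> < 1" using M that by auto
    then have "real (c n) < real (c M + 1)" "real (c M) < real (c n + 1)" by linarith+
    then show ?thesis by (simp only: of_nat_less_iff)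
  qed
  then show ?thesis unfolding eventually_sequentially by blast
qed

lemma inj_dens_antichain:
  assumes "finite VG"
  shows "inj_dens {0..<k} {} VG EG = of_bool (k \<le> card VG)"
proof (cases "k \<le> card VG")
  case True
  then have "(\<Prod>i<k. card VG - i) \<noteq> 0" by simp
  with True assms show ?thesis by (simp add: inj_dens_def is_hom_def card_inj_funcset)
qed (simp add: inj_dens_def)

lemma card_converges_if_eventually_decided:
  assumes "\<And>k. eventually (\<lambda>n. k \<le> s n) sequentially \<or> eventually (\<lambda>n. s n < k) sequentially"
  shows "card_converges s"
proof (cases "\<forall>k. eventually (\<lambda>n. k \<le> s n) sequentially")
  case True
  then show ?thesis by (simp add: card_converges_def filterlim_at_top)
next
  case False
  define k where "k = (LEAST k. \<not> eventually (\<lambda>n. k \<le> s n) sequentially)"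
  have k: "\<not> eventually (\<lambda>n. k \<le> s n) sequentially"
    using False LeastI_ex[of "\<lambda>k. \<not> eventually (\<lambda>n. k \<le> s n) sequentially"] by (simp add: k_def)
  then have "k \<noteq> 0" by (rule contrapos_nn) simp
  then have "eventually (\<lambda>n. k - 1 \<le> s n) sequentially"
    using not_less_Least[of "k - 1" "\<lambda>k. \<not> eventually (\<lambda>n. k \<le> s n) sequentially"] by (simp add: k_def)
  moreover have "eventually (\<lambda>n. s n < k) sequentially" using assms k by blast
  ultimately have "eventually (\<lambda>n. s n = k - 1) sequentially" by eventually_elim simp
  then show ?thesis by (auto simp: card_converges_def)
qed

lemma card_converges_if_inj_densities_converge:
  assumes fin: "\<And>n. finite (V n)" and inj: "densities_converge is_digraph inj_dens V E"
  shows "card_converges (\<lambda>n. card (V n))"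
proof (rule card_converges_if_eventually_decided)
  fix k
  show "eventually (\<lambda>n. k \<le> card (V n)) sequentially \<or> eventually (\<lambda>n. card (V n) < k) sequentially"
  proof (cases "k = 0")
    case False
    then have "is_digraph {0..<k} {}" by (simp add: is_digraph_def)
    with inj have "convergent (\<lambda>n. inj_dens {0..<k} {} (V n) (E n))"
      by (simp add: densities_converge_def)
    then have "convergent (\<lambda>n. real (of_bool (k \<le> card (V n))))"
      by (simp add: inj_dens_antichain[OF fin])
    from eventually_const_if_convergent_nat[OF this]
    obtain v :: nat where v: "eventually (\<lambda>n. of_bool (k \<le> card (V n)) = v) sequentially" ..
    show ?thesis
    proof (cases "v = 0")
      case True
      from v have "eventually (\<lambda>n. card (V n) < k) sequentially" by eventually_elim (use True in auto)
      then show ?thesis ..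
    next
      case False
      from v have "eventually (\<lambda>n. k \<le> card (V n)) sequentially" by eventually_elim (use False in auto)
      then show ?thesis ..
    qed
  qed simp
qed

subsection \<open>Homomorphism versus injective densities\<close>

lemma pow_diff_le_prod_diff: "(N - k) ^ k \<le> (\<Prod>i<k. N - i :: nat)"
proof -
  have "(N - k) ^ k = (\<Prod>i<k. N - k)" by simp
  also have "\<dots> \<le> (\<Prod>i<k. N - i)" by (rule prod_mono) auto
  finally show ?thesis .
qed

lemma one_minus_pow_ratio_le:
  fixes N k :: nat
  assumes "k \<le> N" "0 < N"
  shows "1 - real ((N - k) ^ k) / real (N ^ k) \<le> real k * real k / real N"
proof -
  have "real ((N - k) ^ k) / real (N ^ k) = (1 + (- (real k / real N))) ^ k"
    using assms by (simp add: power_divide of_nat_diff field_simps)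
  moreover have "1 + real k * (- (real k / real N)) \<le> (1 + (- (real k / real N))) ^ k"
    using assms by (intro Bernoulli_inequality) simp
  ultimately show ?thesis by (simp add: field_simps)
qed

text \<open>h/T and i/a are the hom density and injective density of a target with T maps and a
  injective maps, h of them homomorphisms and i injective homomorphisms.\<close>

lemma abs_ratio_diff_le:
  fixes h i a T :: real
  assumes "0 \<le> i" "i \<le> h" "h - i \<le> T - a" "i \<le> a" "0 < a" "a \<le> T"
  shows "\<bar>h / T - i / a\<bar> \<le> 1 - a / T"
proof -
  have T: "T > 0" using assms by simp
  have "h / T - i / T = (h - i) / T" by (simp add: diff_divide_distrib)
  also have "\<dots> \<le> (T - a) / T" using assms T by (intro divide_right_mono) auto
  also have "\<dots> = 1 - a / T" using T by (simp add: diff_divide_distrib)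
  finally have "h / T - i / T \<le> 1 - a / T" .
  moreover have "i / a - i / T = (i / a) * (1 - a / T)" using assms T by (simp add: field_simps)
  moreover have "(i / a) * (1 - a / T) \<le> 1 - a / T"
    using assms T by (intro mult_left_le_one_le) simp_all
  moreover have "i / T \<le> i / a" "i / T \<le> h / T"
    using assms T by (simp_all add: divide_left_mono divide_right_mono)
  ultimately show ?thesis by (simp add: abs_le_iff)
qed

lemma abs_hom_dens_diff_inj_dens_le:
  assumes "finite VF" "finite VG" "card VF \<le> card VG" "0 < card VG"
  shows "\<bar>hom_dens VF EF VG EG - inj_dens VF EF VG EG\<bar> \<le> real (card VF) * real (card VF) / real (card VG)"
proof -
  define T where "T = VF \<rightarrow>\<^sub>E VG"
  define A where "A = {\<phi> \<in> T. inj_on \<phi> VF}"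
  define H where "H = {\<phi> \<in> T. is_hom EF EG \<phi>}"
  define I where "I = {\<phi> \<in> T. inj_on \<phi> VF \<and> is_hom EF EG \<phi>}"
  have fin: "finite T" using assms(1,2) by (simp add: T_def finite_PiE)
  have sub: "I \<subseteq> H" "I \<subseteq> A" "A \<subseteq> T" "H \<subseteq> T" "H - I \<subseteq> T - A"
    by (auto simp: I_def H_def A_def)
  then have "card H - card I \<le> card T - card A"
    using fin card_mono[of "T - A" "H - I"] by (simp add: card_Diff_subset finite_subset)
  moreover have "card I \<le> card H" "card I \<le> card A" "card A \<le> card T"
    using sub fin by (simp_all add: card_mono finite_subset)
  ultimately have "real (card H) - real (card I) \<le> real (card T) - real (card A)" by linarith
  moreover have A: "card A = (\<Prod>i<card VF. card VG - i)"
    using assms(1,2) by (simp add: A_def T_def card_inj_funcset)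
  then have "0 < card A" using assms(3) by simp
  moreover have "hom_dens VF EF VG EG = real (card H) / real (card T)"
    by (simp add: hom_dens_def H_def T_def)
  moreover have "inj_dens VF EF VG EG = real (card I) / real (card A)"
    using assms(2) by (simp add: inj_dens_eq_ratio I_def A_def T_def)
  ultimately have "\<bar>hom_dens VF EF VG EG - inj_dens VF EF VG EG\<bar> \<le> 1 - real (card A) / real (card T)"
    using \<open>card I \<le> card H\<close> \<open>card I \<le> card A\<close> \<open>card A \<le> card T\<close> by (simp add: abs_ratio_diff_le)
  also have "\<dots> \<le> 1 - real ((card VG - card VF) ^ card VF) / real (card VG ^ card VF)"
  proof -
    have "card T = card VG ^ card VF" using assms(1) by (simp add: T_def card_funcsetE)
    moreover have "real ((card VG - card VF) ^ card VF) \<le> real (card A)"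
      unfolding A of_nat_le_iff by (rule pow_diff_le_prod_diff)
    ultimately show ?thesis by (metis diff_left_mono divide_right_mono of_nat_0_le_iff)
  qed
  also have "\<dots> \<le> real (card VF) * real (card VF) / real (card VG)"
    using assms(3,4) by (rule one_minus_pow_ratio_le)
  finally show ?thesis .
qed

lemma hom_dens_diff_inj_dens_tendsto_0:
  assumes fin: "\<And>n. finite (V n)" and unbounded: "filterlim (\<lambda>n. card (V n)) at_top sequentially"
    and "finite F"
  shows "(\<lambda>n. hom_dens F EF (V n) (E n) - inj_dens F EF (V n) (E n)) \<longlonglongrightarrow> 0"
proof (rule Lim_null_comparison)
  have "eventually (\<lambda>n. max (card F) 1 \<le> card (V n)) sequentially"
    using unbounded unfolding filterlim_at_top by blast
  then show "eventually (\<lambda>n. norm (hom_dens F EF (V n) (E n) - inj_dens F EF (V n) (E n))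
      \<le> real (card F) * real (card F) * inverse (real (card (V n)))) sequentially"
    by eventually_elim (use abs_hom_dens_diff_inj_dens_le[OF \<open>finite F\<close> fin] in \<open>simp add: divide_inverse\<close>)
  have "filterlim (\<lambda>n. real (card (V n))) at_top sequentially"
    by (rule filterlim_compose[OF filterlim_real_sequentially unbounded])
  then show "(\<lambda>n. real (card F) * real (card F) * inverse (real (card (V n)))) \<longlonglongrightarrow> 0"
    by (intro tendsto_mult_right_zero tendsto_inverse_0_at_top)
qed

lemma hom_iff_inj_densities_converge_unbounded:
  assumes fin: "\<And>n. finite (V n)" and unbounded: "filterlim (\<lambda>n. card (V n)) at_top sequentially"
  shows "densities_converge is_digraph hom_dens V E \<longleftrightarrow> densities_converge is_digraph inj_dens V E"
proof -
  have "convergent (\<lambda>n. hom_dens F EF (V n) (E n)) \<longleftrightarrow> convergent (\<lambda>n. inj_dens F EF (V n) (E n))"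
    if "finite F" for F :: "nat set" and EF
  proof -
    have diff: "convergent (\<lambda>n. hom_dens F EF (V n) (E n) - inj_dens F EF (V n) (E n))"
      using hom_dens_diff_inj_dens_tendsto_0[OF fin unbounded that] by (rule convergentI)
    show ?thesis
    proof
      assume "convergent (\<lambda>n. hom_dens F EF (V n) (E n))"
      from convergent_diff[OF this diff] show "convergent (\<lambda>n. inj_dens F EF (V n) (E n))" by simp
    next
      assume "convergent (\<lambda>n. inj_dens F EF (V n) (E n))"
      from convergent_add[OF this diff] show "convergent (\<lambda>n. hom_dens F EF (V n) (E n))" by simp
    qed
  qed
  then show ?thesis by (auto simp: densities_converge_def is_digraph_def)
qed

lemma eventually_hom_dens_eq_sum_inj_dens:
  assumes "\<And>n. finite (V n)" "eventually (\<lambda>n. card (V n) = L) sequentially" "is_digraph F EF"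
  shows "eventually (\<lambda>n. hom_dens F EF (V n) (E n) * L ^ card F
           = (\<Sum>r\<in>kernel_retractions F.
                inj_dens (r ` F) (map_prod r r ` EF) (V n) (E n) * (\<Prod>i<card (r ` F). L - i)))
           sequentially"
  using assms(2)
proof eventually_elim
  case (elim n)
  then show ?case
    using hom_dens_eq_sum_inj_dens[of F "V n" EF "E n"] assms(1,3) by (simp add: is_digraph_def)
qed

lemma hom_densities_converge_if_inj_bounded:
  assumes fin: "\<And>n. finite (V n)" and L: "eventually (\<lambda>n. card (V n) = L) sequentially" "0 < L"
    and inj: "densities_converge is_digraph inj_dens V E"
  shows "densities_converge is_digraph hom_dens V E"
  unfolding densities_converge_def
proof (intro allI impI)
  fix F :: "nat set" and EF assume F: "is_digraph F EF"
  have "convergent (\<lambda>n. \<Sum>r\<in>kernel_retractions F.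
          inj_dens (r ` F) (map_prod r r ` EF) (V n) (E n) * (\<Prod>i<card (r ` F). L - i))"
    using inj is_digraph_quotient[OF F]
    by (intro convergent_sum convergent_mult convergent_const) (simp add: densities_converge_def)
  then have "convergent (\<lambda>n. real (L ^ card F) * hom_dens F EF (V n) (E n))"
    using convergent_cong[OF eventually_hom_dens_eq_sum_inj_dens[where V = V and E = E, OF fin L(1) F]] by (simp add: mult.commute)
  then show "convergent (\<lambda>n. hom_dens F EF (V n) (E n))"
    using L(2) by (simp add: convergent_mult_const_iff)
qed

lemma inj_densities_converge_if_hom_bounded:
  assumes fin: "\<And>n. finite (V n)" and L: "eventually (\<lambda>n. card (V n) = L) sequentially"
    and hom: "densities_converge is_digraph hom_dens V E"
  shows "densities_converge is_digraph inj_dens V E"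
proof -
  have "convergent (\<lambda>n. inj_dens F EF (V n) (E n))" if "is_digraph F EF" for F :: "nat set" and EF
    using that
  proof (induction "card F" arbitrary: F EF rule: less_induct)
    case less
    note F = less.prems
    have fin_F: "finite F" and EF: "EF \<subseteq> F \<times> F" using F by (auto simp: is_digraph_def)
    let ?id = "\<lambda>i\<in>F. i"
    let ?R = "kernel_retractions F - {?id}"
    let ?term = "\<lambda>n r. inj_dens (r ` F) (map_prod r r ` EF) (V n) (E n) * (\<Prod>i<card (r ` F). L - i)"
    have id_quotient: "map_prod ?id ?id ` EF = EF" using EF by (force simp: image_iff)
    have "eventually (\<lambda>n. inj_dens F EF (V n) (E n) * (\<Prod>i<card F. L - i)
        = hom_dens F EF (V n) (E n) * L ^ card F - (\<Sum>r\<in>?R. ?term n r)) sequentially"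
      using eventually_hom_dens_eq_sum_inj_dens[where V = V and E = E, OF fin L F]
    proof eventually_elim
      case (elim n)
      with sum.remove[OF finite_kernel_retractions[OF fin_F] id_in_kernel_retractions, of "?term n"]
      show ?case by (simp add: id_quotient)
    qed
    moreover have "convergent (\<lambda>n. \<Sum>r\<in>?R. ?term n r)"
    proof (intro convergent_sum convergent_mult convergent_const)
      fix r assume "r \<in> ?R"
      then show "convergent (\<lambda>n. inj_dens (r ` F) (map_prod r r ` EF) (V n) (E n))"
        using fin_F F by (intro less.hyps card_image_kernel_retraction_less is_digraph_quotient) auto
    qed
    moreover have "convergent (\<lambda>n. hom_dens F EF (V n) (E n) * L ^ card F)"
      using hom F by (intro convergent_mult convergent_const) (simp add: densities_converge_def)
    ultimately have conv: "convergent (\<lambda>n. inj_dens F EF (V n) (E n) * (\<Prod>i<card F. L - i))"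
      by (simp add: convergent_cong convergent_diff)
    show ?case
    proof (cases "card F \<le> L")
      case True
      then have nonzero: "real (\<Prod>i<card F. L - i) \<noteq> 0" by simp
      from conv have "convergent (\<lambda>n. real (\<Prod>i<card F. L - i) * inj_dens F EF (V n) (E n))"
        by (simp only: mult.commute)
      then show ?thesis by (simp only: convergent_mult_const_iff[OF nonzero])
    next
      case False
      from L have "eventually (\<lambda>n. inj_dens F EF (V n) (E n) = 0) sequentially"
        by eventually_elim (use False in \<open>simp add: inj_dens_def\<close>)
      then show ?thesis by (simp add: convergent_cong convergent_const)
    qed
  qed
  then show ?thesis by (simp add: densities_converge_def)
qed

lemma hom_densities_converge_iff_inj:
  assumes digraphs: "\<And>n. is_digraph (V n) (E n)"
  shows "densities_converge is_digraph hom_dens V E \<and> card_converges (\<lambda>n. card (V n))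
     \<longleftrightarrow> densities_converge is_digraph inj_dens V E"
proof -
  have fin: "\<And>n. finite (V n)" using digraphs by (simp add: is_digraph_def)
  have "densities_converge is_digraph hom_dens V E \<longleftrightarrow> densities_converge is_digraph inj_dens V E"
    if "card_converges (\<lambda>n. card (V n))"
  proof (cases "filterlim (\<lambda>n. card (V n)) at_top sequentially")
    case True
    then show ?thesis by (rule hom_iff_inj_densities_converge_unbounded[where V = V and E = E, OF fin])
  next
    case False
    with that obtain L where L: "eventually (\<lambda>n. card (V n) = L) sequentially"
      by (auto simp: card_converges_def)
    then obtain n where "card (V n) = L" by (auto simp: eventually_sequentially)
    with digraphs[of n] have "0 < L" by (auto simp: is_digraph_def card_gt_0_iff)
    with L fin show ?thesis
      using hom_densities_converge_if_inj_bounded inj_densities_converge_if_hom_bounded by blast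
  qed
  then show ?thesis using card_converges_if_inj_densities_converge[where V = V and E = E, OF fin] by blast
qed

theorem theorem3p1:
  fixes V :: "nat \<Rightarrow> 'a set" and E :: "nat \<Rightarrow> ('a \<times> 'a) set"
  assumes posets: "\<And>n. is_poset (V n) (E n)"
  defines "c1 \<equiv> (\<forall>(Q::nat set) EQ. is_poset Q EQ \<longrightarrow>
                    convergent (\<lambda>n. hom_dens Q EQ (V n) (E n)))
                 \<and> card_converges (\<lambda>n. card (V n))"
      and "c2 \<equiv> (\<forall>(Q::nat set) EQ. is_poset Q EQ \<longrightarrow>
                    convergent (\<lambda>n. inj_dens Q EQ (V n) (E n)))"
      and "c3 \<equiv> (\<forall>(Q::nat set) EQ. is_poset Q EQ \<longrightarrow>
                    convergent (\<lambda>n. ind_dens Q EQ (V n) (E n)))"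
      and "c4 \<equiv> (\<forall>(F::nat set) EF. is_digraph F EF \<longrightarrow>
                    convergent (\<lambda>n. hom_dens F EF (V n) (E n)))
                 \<and> card_converges (\<lambda>n. card (V n))"
      and "c5 \<equiv> (\<forall>(F::nat set) EF. is_digraph F EF \<longrightarrow>
                    convergent (\<lambda>n. inj_dens F EF (V n) (E n)))"
      and "c6 \<equiv> (\<forall>(F::nat set) EF. is_digraph F EF \<longrightarrow>
                    convergent (\<lambda>n. ind_dens F EF (V n) (E n)))"
  shows "(c1 \<longleftrightarrow> c2) \<and> (c1 \<longleftrightarrow> c3) \<and> (c1 \<longleftrightarrow> c4) \<and> (c1 \<longleftrightarrow> c5) \<and> (c1 \<longleftrightarrow> c6)"
proof -
  have digraphs: "\<And>n. is_digraph (V n) (E n)" using posets by (simp add: is_poset_def)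
  then have fin: "\<And>n. finite (V n)" by (simp add: is_digraph_def)
  have "c1 \<longleftrightarrow> c4"
    using hom_densities_converge_digraphs_iff_posets[where V = V and E = E, OF posets]
    unfolding c1_def c4_def densities_converge_def by blast
  moreover have "c2 \<longleftrightarrow> c5"
    using inj_densities_converge_digraphs_iff_posets[where V = V and E = E, OF posets]
    unfolding c2_def c5_def densities_converge_def by blast
  moreover have "c3 \<longleftrightarrow> c6"
    using ind_densities_converge_digraphs_iff_posets[where V = V and E = E, OF posets]
    unfolding c3_def c6_def densities_converge_def by blast
  moreover have "c4 \<longleftrightarrow> c5"
    using hom_densities_converge_iff_inj[where V = V and E = E, OF digraphs]
    unfolding c4_def c5_def densities_converge_def by blast
  moreover have "c5 \<longleftrightarrow> c6"
    using inj_densities_converge_iff_ind[where V = V and E = E, OF fin]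
    unfolding c5_def c6_def densities_converge_def by blast
  ultimately show ?thesis by blast
qed

end
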